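(* Let $d\ge2$, $p>p_c(d)$, $\vec\ell\in S^{d-1}$, $\lambda>0$ and $\alpha>d+3$. There is a constant $c>0$ such that for every $L\ge1$ and every configuration $\omega$ with $0\in K_\infty$, \[ \Lambda_\omega(B(L,L^\alpha))\geq cL^{-2d\alpha}e^{-2\lambda\,\mathcal{B}\mathcal{K}(L,L^\alpha)}. \]
   Context: $\omega$ is a bond percolation configuration on $E(\mathbb{Z}^d)$ with unique infinite open cluster $K_\infty$. With $\ell=\lambda\vec\ell$, open edges $[x,y]$ have conductance $c^\omega([x,y])=e^{(x+y)\cdot\ell}$, closed ones $0$; $\pi^\omega(x)=\sum_{y\sim x}c^\omega(x,y)$. Let $f_1=\vec\ell,\dots,f_d$ be an orthonormal basis of $\mathbb{R}^d$, $B(L,L')=\{z\in\mathbb{Z}^d:|z\cdot\vec\ell|<L,\ |z\cdot f_i|<L'\ (2\le i\le d)\}$. Dirichlet form $\mathcal{E}(f,f)=\frac12\sum_{|x-y|=1}(f(y)-f(x))^2c^\omega([x,y])$. $\Lambda_\omega(B)=\inf\{\mathcal{E}(f,f): f=0 \text{ off } B\cap K_\infty,\ \|f\|_{L^2(\pi^\omega)}=1\}$ if $B\cap K_\infty\ne\emptyset$ and $\Lambda_\omega(B)=\infty$ otherwise. $\mathcal{B}\mathcal{K}(x)=0$ if $x\notin K_\infty$, otherwise $\min$ over infinite open self-avoiding paths $\pi$ from $x$ of $\max_i(x-\pi(i))\cdot\vec\ell$; $\mathcal{B}\mathcal{K}(L,L^\alpha)=\max_{x\in B(L,L^\alpha)}\mathcal{B}\mathcal{K}(x)$.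 *)

theory Defs
  imports "HOL-Analysis.Analysis"
begin

text \<open>Lattice Z^d is modelled as int ^ 'n (d = CARD('n)).\<close>

definition rv :: "int ^ 'n \<Rightarrow> real ^ 'n" where
  "rv z = (\<chi> i. real_of_int (z $ i))"

definition adj :: "int ^ 'n \<Rightarrow> int ^ 'n \<Rightarrow> bool" where
  "adj x y \<longleftrightarrow> (\<Sum>i\<in>UNIV. \<bar>x $ i - y $ i\<bar>) = 1"

text \<open>A bond configuration: omega {x,y} = True iff the edge [x,y] is open.\<close>
type_synonym 'n config = "(int ^ 'n) set \<Rightarrow> bool"

definition open_edge :: "'n::finite config \<Rightarrow> int ^ 'n \<Rightarrow> int ^ 'n \<Rightarrow> bool" where
  "open_edge \<omega> x y \<longleftrightarrow> adj x y \<and> \<omega> {x, y}"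

definition cluster :: "'n::finite config \<Rightarrow> int ^ 'n \<Rightarrow> (int ^ 'n) set" where
  "cluster \<omega> x = {y. (open_edge \<omega>)\<^sup>*\<^sup>* x y}"

definition infinite_clusters :: "'n::finite config \<Rightarrow> (int ^ 'n) set set" where
  "infinite_clusters \<omega> = {C. (\<exists>x. C = cluster \<omega> x) \<and> infinite C}"

text \<open>The unique infinite open cluster (meaningful when it is unique).\<close>
definition Kinf :: "'n::finite config \<Rightarrow> (int ^ 'n) set" where
  "Kinf \<omega> = (THE C. C \<in> infinite_clusters \<omega>)"

text \<open>Conductance of the pair (x,y), with drift vector ell = lambda * ellvec.\<close>
definition cond :: "'n::finite config \<Rightarrow> real ^ 'n \<Rightarrow> int ^ 'n \<Rightarrow> int ^ 'n \<Rightarrow> real" where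
  "cond \<omega> ell x y = (if open_edge \<omega> x y then exp ((rv x + rv y) \<bullet> ell) else 0)"

definition piw :: "'n::finite config \<Rightarrow> real ^ 'n \<Rightarrow> int ^ 'n \<Rightarrow> real" where
  "piw \<omega> ell x = (\<Sum>y\<in>{y. adj x y}. cond \<omega> ell x y)"

definition dirichlet :: "'n::finite config \<Rightarrow> real ^ 'n \<Rightarrow> (int ^ 'n \<Rightarrow> real) \<Rightarrow> real" where
  "dirichlet \<omega> ell f = (1/2) * infsum (\<lambda>(x,y). (f y - f x)^2 * cond \<omega> ell x y) {(x,y). adj x y}"

definition L2sq :: "'n::finite config \<Rightarrow> real ^ 'n \<Rightarrow> (int ^ 'n \<Rightarrow> real) \<Rightarrow> real" where
  "L2sq \<omega> ell f = infsum (\<lambda>x. (f x)^2 * piw \<omega> ell x) UNIV"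

definition Lambda :: "'n::finite config \<Rightarrow> real ^ 'n \<Rightarrow> (int ^ 'n) set \<Rightarrow> ereal" where
  "Lambda \<omega> ell B =
     (if B \<inter> Kinf \<omega> = {} then \<infinity>
      else Inf (ereal ` {dirichlet \<omega> ell f | f.
              (\<forall>x. x \<notin> B \<inter> Kinf \<omega> \<longrightarrow> f x = 0) \<and> sqrt (L2sq \<omega> ell f) = 1}))"

text \<open>Box B(L,L') w.r.t. an orthonormal basis f with f i0 = ellvec.\<close>
definition box :: "('n \<Rightarrow> real ^ 'n) \<Rightarrow> 'n \<Rightarrow> real \<Rightarrow> real \<Rightarrow> (int ^ 'n) set" where
  "box f i0 L L' = {z. \<bar>rv z \<bullet> f i0\<bar> < L \<and> (\<forall>i. i \<noteq> i0 \<longrightarrow> \<bar>rv z \<bullet> f i\<bar> < L')}"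

definition open_sa_path :: "'n::finite config \<Rightarrow> int ^ 'n \<Rightarrow> (nat \<Rightarrow> int ^ 'n) \<Rightarrow> bool" where
  "open_sa_path \<omega> x p \<longleftrightarrow> p 0 = x \<and> inj p \<and> (\<forall>i. open_edge \<omega> (p i) (p (Suc i)))"

text \<open>Backtrack function BK(x) (min/max rendered as Inf/Sup in ereal).\<close>
definition BK :: "'n::finite config \<Rightarrow> real ^ 'n \<Rightarrow> int ^ 'n \<Rightarrow> ereal" where
  "BK \<omega> ellvec x =
     (if x \<notin> Kinf \<omega> then 0
      else (INF p \<in> {p. open_sa_path \<omega> x p}. SUP i. ereal ((rv x - rv (p i)) \<bullet> ellvec)))"

definition BKbox :: "'n::finite config \<Rightarrow> real ^ 'n \<Rightarrow> ('n \<Rightarrow> real ^ 'n) \<Rightarrow> 'n \<Rightarrow> real \<Rightarrow> real \<Rightarrow> ereal" where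
  "BKbox \<omega> ellvec f i0 L L' = (SUP x \<in> box f i0 L L'. BK \<omega> ellvec x)"

fun expE :: "ereal \<Rightarrow> ereal" where
  "expE (ereal r) = ereal (exp r)"
| "expE PInfty = PInfty"
| "expE MInfty = 0"

end

theory Submission
  imports Defs
begin

text \<open>
  Let \<open>A\<close> be the set of points of the box in \<open>K\<^sub>\<infinity>\<close> and \<open>M\<close> the largest backtrack on the box.
  Each \<open>x \<in> A\<close> starts an infinite open self-avoiding path that never falls more than \<open>M\<close>
  below \<open>x\<close> in direction \<open>\<ell>\<close>, so all its conductances are at least \<open>exp(2\<lambda> x\<cdot>\<ell> - 2\<lambda>M - 2\<lambda>)\<close>,
  while \<open>\<pi>(x) \<le> 3\<^sup>d exp(2\<lambda> x\<cdot>\<ell> + \<lambda>)\<close>. The path leaves \<open>A\<close>, where the test function \<open>h\<close>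
  vanishes, within \<open>|A|\<close> steps; telescoping and Cauchy-Schwarz along it bound \<open>h(x)\<^sup>2 \<pi>(x)\<close>
  by \<open>3\<^sup>d exp(3\<lambda> + 2\<lambda>M) |A|\<close> times the energy of \<open>h\<close>. Summing over \<open>A\<close> gives a Poincare inequality
  with constant of order \<open>|A|\<^sup>2 exp(2\<lambda>M)\<close>, and \<open>|A| \<le> (3 d L\<^sup>\<alpha>)\<^sup>d\<close>.
\<close>

section \<open>Lattice geometry\<close>

lemma finite_vec_Pi:
  fixes S :: "'n::finite \<Rightarrow> 'a set"
  assumes "\<And>j. finite (S j)"
  shows "finite {z::'a^'n. \<forall>j. z$j \<in> S j}"
    and "card {z::'a^'n. \<forall>j. z$j \<in> S j} \<le> (\<Prod>j\<in>UNIV. card (S j))"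
proof -
  have eq: "{z::'a^'n. \<forall>j. z$j \<in> S j} = vec_lambda ` (PiE UNIV S)"
  proof (rule set_eqI, rule iffI)
    fix z :: "'a^'n" assume "z \<in> {z. \<forall>j. z$j \<in> S j}"
    then have "(\<lambda>j. z$j) \<in> PiE UNIV S" by auto
    then show "z \<in> vec_lambda ` (PiE UNIV S)" by (metis image_eqI vec_lambda_eta)
  qed auto
  have fin: "finite (PiE UNIV S)" using assms by (simp add: finite_PiE)
  then show "finite {z::'a^'n. \<forall>j. z$j \<in> S j}" unfolding eq by simp
  show "card {z::'a^'n. \<forall>j. z$j \<in> S j} \<le> (\<Prod>j\<in>UNIV. card (S j))"
    unfolding eq using card_image_le[OF fin, of vec_lambda] card_PiE[of UNIV S] by simp
qed

lemma adj_sym: "adj x y \<Longrightarrow> adj y x"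
  unfolding adj_def by (simp add: abs_minus_commute)

lemma abs_component_diff_le_adj: "adj x y \<Longrightarrow> \<bar>x$j - y$j\<bar> \<le> 1"
  unfolding adj_def by (metis UNIV_I abs_ge_zero finite member_le_sum)

lemma finite_adj: "finite {y. adj x y}"
  and card_adj_le: "card {y. adj x y} \<le> 3 ^ CARD('n)"
  for x :: "int^'n::finite"
proof -
  define S where "S = (\<lambda>j. {x$j - 1 .. x$j + 1})"
  have sub: "{y. adj x y} \<subseteq> {z. \<forall>j. z$j \<in> S j}"
  proof (clarsimp simp: S_def)
    fix y j assume "adj x y"
    then have "\<bar>x$j - y$j\<bar> \<le> 1" by (rule abs_component_diff_le_adj)
    then show "x$j - 1 \<le> y$j \<and> y$j \<le> x$j + 1" by linarith
  qed
  have fS: "\<And>j. finite (S j)" unfolding S_def by simp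
  note cube = finite_vec_Pi[of S, OF fS]
  show "finite {y. adj x y}" by (rule finite_subset[OF sub cube(1)])
  have "card {y. adj x y} \<le> (\<Prod>j\<in>UNIV. card (S j))"
    using card_mono[OF cube(1) sub] cube(2) by linarith
  then show "card {y. adj x y} \<le> 3 ^ CARD('n)" by (simp add: S_def)
qed

lemma norm_rv_diff_le_adj:
  assumes "adj x y"
  shows "norm (rv y - rv x) \<le> 1"
proof -
  have "norm (rv y - rv x) \<le> (\<Sum>i\<in>UNIV. \<bar>(rv y - rv x)$i\<bar>)" by (rule norm_le_l1_cart)
  also have "\<dots> = real_of_int (\<Sum>i\<in>UNIV. \<bar>x$i - y$i\<bar>)"
    by (simp add: rv_def abs_minus_commute)
  also have "\<dots> = 1" using assms unfolding adj_def by simp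
  finally show ?thesis .
qed

lemma sum_inner_orthonormal_power2:
  fixes f :: "'n::finite \<Rightarrow> real^'n"
  assumes "\<forall>i j. f i \<bullet> f j = (if i = j then 1 else 0)"
  shows "(\<Sum>i\<in>UNIV. (u \<bullet> f i)^2) = (norm u)^2"
proof -
  define Q :: "real^'n^'n" where "Q = (\<chi> i. f i)"
  have "Q ** transpose Q = mat 1"
    using assms by (simp add: Q_def matrix_matrix_mult_def transpose_def mat_def inner_vec_def
        vec_eq_iff mult.commute)
  then have QQ: "transpose Q ** Q = mat 1" using matrix_left_right_inverse by blast
  have "(\<Sum>i\<in>UNIV. (u \<bullet> f i)^2) = (Q *v u) \<bullet> (Q *v u)"
    by (simp add: Q_def inner_vec_def matrix_vector_mult_def power2_eq_square inner_commute
        mult.commute)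
  also have "\<dots> = u \<bullet> (transpose Q *v (Q *v u))"
    by (metis dot_lmul_matrix inner_commute transpose_transpose vector_transpose_matrix)
  also have "\<dots> = u \<bullet> u" using QQ by (simp add: matrix_vector_mul_assoc)
  finally show ?thesis by (simp add: power2_norm_eq_inner)
qed

lemma box_subset_cube:
  fixes f :: "'n::finite \<Rightarrow> real^'n" and L L' :: real
  assumes ortho: "\<forall>i j. f i \<bullet> f j = (if i = j then 1 else 0)" and "L \<le> L'"
  shows "box f i0 L L' \<subseteq> {z. \<forall>j. z$j \<in> {-\<lfloor>CARD('n) * L'\<rfloor>..\<lfloor>CARD('n) * L'\<rfloor>}}"
proof clarify
  fix z j assume "z \<in> box f i0 L L'"
  then have coord: "\<bar>rv z \<bullet> f i\<bar> \<le> L'" for i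
    using \<open>L \<le> L'\<close> unfolding box_def by (cases "i = i0") auto
  then have "L' \<ge> 0" by (meson abs_ge_zero order_trans)
  have d1: "real CARD('n) \<ge> 1" by (simp add: Suc_le_eq)
  have "(norm (rv z))^2 = (\<Sum>i\<in>UNIV. (rv z \<bullet> f i)^2)"
    by (rule sum_inner_orthonormal_power2[OF ortho, symmetric])
  also have "\<dots> \<le> CARD('n) * L'^2"
    using coord \<open>L' \<ge> 0\<close> by (intro sum_bounded_above) (metis abs_le_square_iff abs_of_nonneg)
  also have "\<dots> \<le> CARD('n) * (CARD('n) * L'^2)"
    using d1 mult_right_mono[of 1 "real CARD('n)" "CARD('n) * L'^2"] by simp
  also have "\<dots> = (CARD('n) * L')^2" by (simp add: power2_eq_square mult_ac)
  finally have "norm (rv z) \<le> CARD('n) * L'"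
    by (rule power2_le_imp_le) (use \<open>L' \<ge> 0\<close> in simp)
  moreover have "\<bar>rv z $ j\<bar> \<le> norm (rv z)" by (rule component_le_norm_cart)
  ultimately have "real_of_int \<bar>z$j\<bar> \<le> CARD('n) * L'" by (simp add: rv_def)
  then have "\<bar>z$j\<bar> \<le> \<lfloor>CARD('n) * L'\<rfloor>" by (simp add: le_floor_iff)
  then show "z$j \<in> {-\<lfloor>CARD('n) * L'\<rfloor>..\<lfloor>CARD('n) * L'\<rfloor>}" by (auto simp: abs_le_iff)
qed

lemma finite_box:
  fixes f :: "'n::finite \<Rightarrow> real^'n" and L L' :: real
  assumes "\<forall>i j. f i \<bullet> f j = (if i = j then 1 else 0)" and "L \<le> L'"
  shows "finite (box f i0 L L')"
  using box_subset_cube[OF assms] finite_vec_Pi(1) by (rule finite_subset) simp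

lemma card_box_le:
  fixes f :: "'n::finite \<Rightarrow> real^'n" and L L' :: real
  assumes ortho: "\<forall>i j. f i \<bullet> f j = (if i = j then 1 else 0)" and "L \<le> L'" and "1 \<le> L'"
  shows "card (box f i0 L L') \<le> (3 * CARD('n) * L') ^ CARD('n)"
proof -
  define N where "N = \<lfloor>CARD('n) * L'\<rfloor>"
  have "1 \<le> real CARD('n)" by (simp add: Suc_le_eq)
  then have "1 \<le> CARD('n) * L'" using mult_mono[OF _ \<open>1 \<le> L'\<close>] by simp
  then have "N \<ge> 1" by (simp add: N_def le_floor_iff)
  note cube = finite_vec_Pi[of "\<lambda>j. {-N..N}"]
  have "card (box f i0 L L') \<le> card {z::int^'n. \<forall>j. z$j \<in> {-N..N}}"
    using box_subset_cube[OF ortho \<open>L \<le> L'\<close>] cube(1) by (intro card_mono) (simp_all add: N_def)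
  also have "\<dots> \<le> nat (2 * N + 1) ^ CARD('n)" using cube(2) by simp
  finally have "card (box f i0 L L') \<le> real (nat (2 * N + 1)) ^ CARD('n)"
    by (metis of_nat_le_iff of_nat_power)
  also have "\<dots> \<le> (3 * CARD('n) * L') ^ CARD('n)"
  proof (rule power_mono)
    have "real (nat (2 * N + 1)) = 2 * N + 1" using \<open>N \<ge> 1\<close> by simp
    then show "real (nat (2 * N + 1)) \<le> 3 * CARD('n) * L'"
      using \<open>1 \<le> CARD('n) * L'\<close> of_int_floor_le[of "CARD('n) * L'"] unfolding N_def by linarith
  qed simp
  finally show ?thesis .
qed

lemma zero_in_box:
  assumes "0 < L" and "0 < L'"
  shows "(0 :: int^'n::finite) \<in> box f i0 L L'"
proof -
  have "rv (0 :: int^'n) = 0" by (simp add: rv_def vec_eq_iff)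
  then show ?thesis using assms by (simp add: box_def)
qed

lemma inverse_card_box_power2_ge:
  fixes f :: "'n::finite \<Rightarrow> real^'n" and K L \<alpha> :: real
  assumes ortho: "\<forall>i j. f i \<bullet> f j = (if i = j then 1 else 0)"
    and "K > 0" and "1 \<le> L" and "1 \<le> \<alpha>"
  shows "1 / (K * (3 * CARD('n)) ^ (2 * CARD('n))) * L powr (- 2 * real CARD('n) * \<alpha>)
           \<le> 1 / (K * (card (box f i0 L (L powr \<alpha>)))^2)"
proof -
  let ?B = "box f i0 L (L powr \<alpha>)"
  have "L \<le> L powr \<alpha>" using assms(3,4) powr_mono[of 1 \<alpha> L] by simp
  have card: "card ?B \<le> (3 * CARD('n) * L powr \<alpha>) ^ CARD('n)"
    using card_box_le[OF ortho \<open>L \<le> L powr \<alpha>\<close>] assms(3) \<open>L \<le> L powr \<alpha>\<close> by simp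
  have "card ?B > 0"
    using finite_box[OF ortho \<open>L \<le> L powr \<alpha>\<close>] zero_in_box[of L "L powr \<alpha>"] assms(3)
    by (auto simp: card_gt_0_iff)
  have "((3 * CARD('n) * L powr \<alpha>) ^ CARD('n))^2
      = (3 * CARD('n)) ^ (2 * CARD('n)) * L powr (2 * real CARD('n) * \<alpha>)"
    using assms(3) by (simp add: power_mult_distrib powr_power mult_ac flip: power_mult)
  moreover have "L powr (- 2 * real CARD('n) * \<alpha>) = 1 / L powr (2 * real CARD('n) * \<alpha>)"
    using assms(3) by (simp add: powr_minus_divide[symmetric])
  ultimately have "1 / (K * (3 * CARD('n)) ^ (2 * CARD('n))) * L powr (- 2 * real CARD('n) * \<alpha>)
      = 1 / (K * ((3 * CARD('n) * L powr \<alpha>) ^ CARD('n))^2)"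
    by simp
  also have "\<dots> \<le> 1 / (K * (card ?B)^2)"
    using card \<open>card ?B > 0\<close> \<open>K > 0\<close> by (intro frac_le mult_left_mono power_mono) auto
  finally show ?thesis .
qed

section \<open>Conductances and the Dirichlet form\<close>

lemma cond_nonneg: "cond \<omega> ell a b \<ge> 0"
  by (simp add: cond_def)

lemma piw_nonneg: "piw \<omega> ell x \<ge> 0"
  unfolding piw_def by (rule sum_nonneg) (simp add: cond_nonneg)

lemma dirichlet_nonneg: "dirichlet \<omega> ell h \<ge> 0"
  unfolding dirichlet_def by (simp add: infsum_nonneg cond_nonneg split_beta)

lemma Lambda_nonneg: "Lambda \<omega> ell B \<ge> 0"
  unfolding Lambda_def by (auto intro!: Inf_greatest simp: dirichlet_nonneg)

lemma expE_infinity [simp]: "expE \<infinity> = \<infinity>"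
  and expE_minfinity [simp]: "expE (- \<infinity>) = 0"
  using expE.simps(2,3) by simp_all

lemma expE_nonneg: "expE t \<ge> 0"
  by (cases t) simp_all

lemma cond_open_edge:
  "open_edge \<omega> a b \<Longrightarrow> cond \<omega> (lam *\<^sub>R v) a b = exp (lam * (rv a \<bullet> v + rv b \<bullet> v))"
  by (simp add: cond_def inner_add_left)

lemma piw_le:
  fixes \<omega> :: "'n::finite config"
  assumes lam: "lam > 0" and nv: "norm v = 1"
  shows "piw \<omega> (lam *\<^sub>R v) x \<le> 3 ^ CARD('n) * exp (2 * lam * (rv x \<bullet> v) + lam)"
proof -
  let ?b = "exp (2 * lam * (rv x \<bullet> v) + lam)"
  have cond_le: "cond \<omega> (lam *\<^sub>R v) x y \<le> ?b" if "adj x y" for y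
  proof (cases "open_edge \<omega> x y")
    case True
    have "(rv y - rv x) \<bullet> v \<le> norm (rv y - rv x) * norm v"
      by (rule norm_cauchy_schwarz)
    also have "\<dots> \<le> 1" using norm_rv_diff_le_adj[OF that] nv by simp
    finally have "lam * ((rv y - rv x) \<bullet> v) \<le> lam" using lam by simp
    then have "lam * (rv x \<bullet> v + rv y \<bullet> v) \<le> 2 * lam * (rv x \<bullet> v) + lam"
      by (simp add: inner_diff_left algebra_simps)
    then show ?thesis using True by (simp add: cond_open_edge)
  qed (simp add: cond_def)
  have "piw \<omega> (lam *\<^sub>R v) x \<le> card {y. adj x y} * ?b"
    unfolding piw_def by (rule sum_bounded_above) (use cond_le in auto)
  also have "\<dots> \<le> 3 ^ CARD('n) * ?b"
    using card_adj_le[of x] by (intro mult_right_mono) (simp_all flip: of_nat_power)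
  finally show ?thesis .
qed

lemma dirichlet_eq_sum:
  assumes "finite S" "S \<subseteq> {(a, b). adj a b}"
    and "\<And>a b. adj a b \<Longrightarrow> (a, b) \<notin> S \<Longrightarrow> h a = 0 \<and> h b = 0"
  shows "dirichlet \<omega> ell h = (\<Sum>(a, b)\<in>S. (h b - h a)^2 * cond \<omega> ell a b) / 2"
proof -
  have "infsum (\<lambda>(a, b). (h b - h a)^2 * cond \<omega> ell a b) {(a, b). adj a b}
      = infsum (\<lambda>(a, b). (h b - h a)^2 * cond \<omega> ell a b) S"
    by (rule infsum_cong_neutral) (use assms(2,3) in auto)
  then show ?thesis unfolding dirichlet_def using assms(1) by simp
qed

lemma L2sq_eq_sum:
  assumes "finite A" "\<forall>y. y \<notin> A \<longrightarrow> h y = 0"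
  shows "L2sq \<omega> ell h = (\<Sum>x\<in>A. (h x)^2 * piw \<omega> ell x)"
proof -
  have "infsum (\<lambda>x. (h x)^2 * piw \<omega> ell x) UNIV = infsum (\<lambda>x. (h x)^2 * piw \<omega> ell x) A"
    by (rule infsum_cong_neutral) (use assms(2) in auto)
  then show ?thesis unfolding L2sq_def using assms(1) by simp
qed

lemma Lambda_ge_inverse_Poincare_const:
  assumes "K > 0"
    and "\<And>h. \<forall>x. x \<notin> B \<inter> Kinf \<omega> \<longrightarrow> h x = 0 \<Longrightarrow> L2sq \<omega> ell h \<le> K * dirichlet \<omega> ell h"
  shows "ereal (1 / K) \<le> Lambda \<omega> ell B"
proof (cases "B \<inter> Kinf \<omega> = {}")
  case False
  have "ereal (1 / K) \<le> ereal (dirichlet \<omega> ell h)"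
    if "\<forall>x. x \<notin> B \<inter> Kinf \<omega> \<longrightarrow> h x = 0" and "sqrt (L2sq \<omega> ell h) = 1" for h
  proof -
    have "1 \<le> K * dirichlet \<omega> ell h" using assms(2)[OF that(1)] that(2) by simp
    then show ?thesis using assms(1) by (simp add: divide_le_eq mult.commute)
  qed
  then show ?thesis using False unfolding Lambda_def by (auto intro!: Inf_greatest)
qed (simp add: Lambda_def)

section \<open>Escaping paths\<close>

lemma BK_nonneg: "BK \<omega> v x \<ge> 0"
proof -
  have "0 \<le> (SUP i. ereal ((rv x - rv (p i)) \<bullet> v))" if "open_sa_path \<omega> x p" for p
  proof -
    have "ereal ((rv x - rv (p 0)) \<bullet> v) = 0" using that by (simp add: open_sa_path_def)
    then show ?thesis by (metis SUP_upper UNIV_I)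
  qed
  then show ?thesis unfolding BK_def by (auto intro: INF_greatest)
qed

lemma open_sa_path_above:
  assumes "x \<in> Kinf \<omega>" and "BK \<omega> v x \<le> ereal M"
  obtains p where "open_sa_path \<omega> x p" and "\<And>i. rv x \<bullet> v - M - 1 < rv (p i) \<bullet> v"
proof -
  have "(INF p\<in>{p. open_sa_path \<omega> x p}. SUP i. ereal ((rv x - rv (p i)) \<bullet> v)) < ereal (M + 1)"
    using assms order_le_less_trans[of _ "ereal M" "ereal (M + 1)"] by (simp add: BK_def)
  then obtain p where "open_sa_path \<omega> x p" and "(SUP i. ereal ((rv x - rv (p i)) \<bullet> v)) < ereal (M + 1)"
    by (auto simp: INF_less_iff)
  moreover have "rv x \<bullet> v - M - 1 < rv (p i) \<bullet> v"
    if "(SUP i. ereal ((rv x - rv (p i)) \<bullet> v)) < ereal (M + 1)" for i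
    using SUP_lessD[OF that, of i] by (simp add: inner_diff_left)
  ultimately show ?thesis using that by blast
qed

lemma inj_exits_finite_set:
  assumes "inj p" and "finite A"
  obtains n where "p n \<notin> A" and "\<forall>i<n. p i \<in> A" and "n \<le> card A"
proof -
  have "\<exists>i. p i \<notin> A"
    using assms finite_subset[of "range p" A] finite_imageD[of p UNIV] by auto
  define n where "n = (LEAST i. p i \<notin> A)"
  have out: "p n \<notin> A" unfolding n_def using \<open>\<exists>i. p i \<notin> A\<close> by (rule LeastI_ex)
  have inside: "\<forall>i<n. p i \<in> A" unfolding n_def using not_less_Least by blast
  have "card (p ` {..<n}) = n" using assms(1) by (simp add: card_image inj_on_subset)
  moreover have "p ` {..<n} \<subseteq> A" using inside by auto
  ultimately have "n \<le> card A" using card_mono[OF assms(2)] by metis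
  with out inside that show ?thesis by blast
qed

lemma power2_le_sum_power2_steps:
  fixes g :: "nat \<Rightarrow> real"
  assumes "g n = 0"
  shows "(g 0)^2 \<le> n * (\<Sum>i<n. (g i - g (Suc i))^2)"
proof -
  have "g 0 = (\<Sum>i<n. g i - g (Suc i))" using sum_lessThan_telescope'[of g n] assms by simp
  then show ?thesis
    using sum_squared_le_sum_of_squares[of "\<lambda>i. g i - g (Suc i)" "{..<n}"] by (simp add: mult.commute)
qed

lemma mass_le_path_energy:
  fixes \<omega> :: "'n::finite config" and h :: "int^'n \<Rightarrow> real"
  assumes finA: "finite A" and "x \<in> Kinf \<omega>" and BKx: "BK \<omega> v x \<le> ereal M"
    and lam: "lam > 0" and nv: "norm v = 1" and supp: "\<forall>y. y \<notin> A \<longrightarrow> h y = 0"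
    and finS: "finite S" and edges: "\<And>a b. adj a b \<Longrightarrow> a \<in> A \<Longrightarrow> (a, b) \<in> S"
  shows "(h x)^2 * piw \<omega> (lam *\<^sub>R v) x
           \<le> 3 ^ CARD('n) * exp (3 * lam) * exp (2 * lam * M) * card A
             * (\<Sum>(a, b)\<in>S. (h b - h a)^2 * cond \<omega> (lam *\<^sub>R v) a b)"
proof -
  let ?l = "lam *\<^sub>R v"
  define energy where "energy = (\<lambda>(a, b). (h b - h a)^2 * cond \<omega> ?l a b)"
  obtain p where path: "open_sa_path \<omega> x p" and above: "\<And>i. rv x \<bullet> v - M - 1 < rv (p i) \<bullet> v"
    using open_sa_path_above[OF assms(2) BKx] by blast
  have p0: "p 0 = x" and "inj p" and open_step: "\<And>i. open_edge \<omega> (p i) (p (Suc i))"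
    using path by (auto simp: open_sa_path_def)
  obtain n where "p n \<notin> A" and inside: "\<forall>i<n. p i \<in> A" and n_le: "n \<le> card A"
    using inj_exits_finite_set[OF \<open>inj p\<close> finA] by blast
  define SD where "SD = (\<Sum>i<n. (h (p i) - h (p (Suc i)))^2)"
  define E0 where "E0 = exp (lam * (2 * (rv x \<bullet> v) - 2 * M - 2))"
  have SD_nonneg: "SD \<ge> 0" unfolding SD_def by (simp add: sum_nonneg)
  have mass: "(h x)^2 \<le> n * SD"
    using power2_le_sum_power2_steps[of "h \<circ> p" n] \<open>p n \<notin> A\<close> supp p0 by (simp add: SD_def)
  \<comment> \<open>The path stays above level \<open>rv x \<bullet> v - M - 1\<close>, so each of its conductances is at least \<open>E0\<close>.\<close>
  have "E0 \<le> cond \<omega> ?l (p i) (p (Suc i))" for i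
    using above[of i] above[of "Suc i"] lam
    by (simp add: E0_def cond_open_edge[OF open_step])
  then have "E0 * SD \<le> (\<Sum>i<n. energy (p i, p (Suc i)))"
    unfolding SD_def sum_distrib_left energy_def
    by (intro sum_mono) (simp add: mult.commute power2_commute mult_right_mono)
  also have "\<dots> = sum energy ((\<lambda>i. (p i, p (Suc i))) ` {..<n})"
    using \<open>inj p\<close> by (subst sum.reindex) (auto simp: inj_on_def inj_def)
  also have "\<dots> \<le> sum energy S"
    using inside open_step edges
    by (intro sum_mono2[OF finS]) (auto simp: energy_def cond_nonneg open_edge_def)
  finally have path_energy: "E0 * SD \<le> sum energy S" .
  have "exp (2 * lam * (rv x \<bullet> v) + lam) = exp (3 * lam) * exp (2 * lam * M) * E0"
    unfolding E0_def exp_add[symmetric] by (simp add: algebra_simps)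
  then have "piw \<omega> ?l x \<le> 3 ^ CARD('n) * exp (3 * lam) * exp (2 * lam * M) * E0"
    using piw_le[OF lam nv, of \<omega> x] by (simp add: mult.assoc)
  then have "(h x)^2 * piw \<omega> ?l x \<le> n * SD * (3 ^ CARD('n) * exp (3 * lam) * exp (2 * lam * M) * E0)"
    using mass SD_nonneg by (intro mult_mono) (auto simp: piw_nonneg)
  also have "\<dots> = (3 ^ CARD('n) * exp (3 * lam) * exp (2 * lam * M)) * n * (E0 * SD)"
    by (simp add: mult_ac)
  also have "\<dots> \<le> (3 ^ CARD('n) * exp (3 * lam) * exp (2 * lam * M)) * card A * sum energy S"
    using path_energy n_le SD_nonneg by (intro mult_mono) (auto simp: E0_def)
  finally show ?thesis by (simp add: energy_def mult_ac)
qed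

section \<open>The spectral gap estimate\<close>

lemma L2sq_le_dirichlet:
  fixes \<omega> :: "'n::finite config" and h :: "int^'n \<Rightarrow> real"
  assumes finA: "finite A" and "A \<subseteq> Kinf \<omega>" and "\<forall>x\<in>A. BK \<omega> v x \<le> ereal M"
    and lam: "lam > 0" and nv: "norm v = 1" and supp: "\<forall>y. y \<notin> A \<longrightarrow> h y = 0"
  shows "L2sq \<omega> (lam *\<^sub>R v) h
           \<le> 2 * 3 ^ CARD('n) * exp (3 * lam) * exp (2 * lam * M) * (card A)^2
             * dirichlet \<omega> (lam *\<^sub>R v) h"
proof -
  let ?l = "lam *\<^sub>R v"
  define S where "S = {(a, b). adj a b \<and> (a \<in> A \<or> b \<in> A)}"
  define N where "N = (\<Union>a\<in>A. {y. adj a y})"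
  have "finite N" unfolding N_def using finA finite_adj by blast
  moreover have "S \<subseteq> A \<times> N \<union> N \<times> A" unfolding S_def N_def using adj_sym by blast
  ultimately have finS: "finite S" using finA by (meson finite_SigmaI finite_UnI finite_subset)
  define G where "G = (\<Sum>(a, b)\<in>S. (h b - h a)^2 * cond \<omega> ?l a b)"
  define K where "K = 3 ^ CARD('n) * exp (3 * lam) * exp (2 * lam * M) * card A"
  have "L2sq \<omega> ?l h = (\<Sum>x\<in>A. (h x)^2 * piw \<omega> ?l x)" by (rule L2sq_eq_sum[OF finA supp])
  also have "\<dots> \<le> (\<Sum>x\<in>A. K * G)"
  proof (rule sum_mono)
    fix x assume "x \<in> A"
    then have "x \<in> Kinf \<omega>" and "BK \<omega> v x \<le> ereal M" using assms(2,3) by auto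
    moreover have "\<And>a b. adj a b \<Longrightarrow> a \<in> A \<Longrightarrow> (a, b) \<in> S" by (simp add: S_def)
    ultimately show "(h x)^2 * piw \<omega> ?l x \<le> K * G" unfolding K_def G_def
      by (rule mass_le_path_energy[OF finA _ _ lam nv supp finS])
  qed
  also have "\<dots> = 2 * card A * K * (G / 2)" by simp
  also have "G / 2 = dirichlet \<omega> ?l h" unfolding G_def
    by (rule dirichlet_eq_sum[symmetric, OF finS]) (auto simp: S_def supp)
  also have "2 * card A * K = 2 * 3 ^ CARD('n) * exp (3 * lam) * exp (2 * lam * M) * (card A)^2"
    by (simp add: K_def power2_eq_square mult_ac)
  finally show ?thesis .
qed

lemma Lambda_ge_BK_bound:
  fixes \<omega> :: "'n::finite config"
  assumes "finite B" "B \<noteq> {}" "\<forall>x\<in>B. BK \<omega> v x \<le> ereal M" "lam > 0" "norm v = 1"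
  shows "ereal (1 / (2 * 3 ^ CARD('n) * exp (3 * lam) * exp (2 * lam * M) * (card B)^2))
           \<le> Lambda \<omega> (lam *\<^sub>R v) B"
proof (rule Lambda_ge_inverse_Poincare_const)
  have "card B > 0" using assms(1,2) by (simp add: card_gt_0_iff)
  then show "2 * 3 ^ CARD('n) * exp (3 * lam) * exp (2 * lam * M) * (card B)^2 > 0" by simp
  fix h :: "int^'n \<Rightarrow> real" assume supp: "\<forall>x. x \<notin> B \<inter> Kinf \<omega> \<longrightarrow> h x = 0"
  define C where "C = 2 * 3 ^ CARD('n) * exp (3 * lam) * exp (2 * lam * M)"
  have "card (B \<inter> Kinf \<omega>) \<le> card B" using assms(1) by (simp add: card_mono)
  then have card_sq: "real (card (B \<inter> Kinf \<omega>))^2 \<le> real (card B)^2" by (simp add: power_mono)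
  have "L2sq \<omega> (lam *\<^sub>R v) h \<le> C * (card (B \<inter> Kinf \<omega>))^2 * dirichlet \<omega> (lam *\<^sub>R v) h"
    unfolding C_def using assms(1,3)
    by (intro L2sq_le_dirichlet[OF _ _ _ assms(4,5) supp]) auto
  also have "\<dots> \<le> C * (card B)^2 * dirichlet \<omega> (lam *\<^sub>R v) h"
    using card_sq by (intro mult_right_mono mult_left_mono) (auto simp: C_def dirichlet_nonneg)
  finally show "L2sq \<omega> (lam *\<^sub>R v) h
      \<le> 2 * 3 ^ CARD('n) * exp (3 * lam) * exp (2 * lam * M) * (card B)^2 * dirichlet \<omega> (lam *\<^sub>R v) h"
    by (simp add: C_def)
qed

lemma Lambda_ge_expE_SUP_BK:
  fixes \<omega> :: "'n::finite config"
  assumes "finite B" "B \<noteq> {}" "lam > 0" "norm v = 1"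
  shows "ereal (1 / (2 * 3 ^ CARD('n) * exp (3 * lam) * (card B)^2))
           * expE (ereal (- 2 * lam) * (SUP x\<in>B. BK \<omega> v x)) \<le> Lambda \<omega> (lam *\<^sub>R v) B"
proof -
  have BK_le_SUP: "BK \<omega> v x \<le> (SUP x\<in>B. BK \<omega> v x)" if "x \<in> B" for x
    using that by (rule SUP_upper)
  show ?thesis
  proof (cases "SUP x\<in>B. BK \<omega> v x")
    case (real M)
    let ?c = "1 / (2 * 3 ^ CARD('n) * exp (3 * lam) * (card B)^2)"
    have "\<forall>x\<in>B. BK \<omega> v x \<le> ereal M" using BK_le_SUP real by simp
    note bound = Lambda_ge_BK_bound[OF assms(1,2) this assms(3,4)]
    have "ereal ?c * expE (ereal (- 2 * lam) * (SUP x\<in>B. BK \<omega> v x)) = ereal (?c * exp (- 2 * lam * M))"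
      by (simp add: real)
    also have "?c * exp (- 2 * lam * M)
        = 1 / (2 * 3 ^ CARD('n) * exp (3 * lam) * exp (2 * lam * M) * (card B)^2)"
      by (simp add: exp_minus divide_simps)
    finally show ?thesis using bound by simp
  next
    case PInf
    then show ?thesis using assms(3) by (simp add: Lambda_nonneg)
  next
    case MInf
    moreover obtain x where "x \<in> B" using assms(2) by blast
    ultimately show ?thesis using BK_le_SUP[of x] BK_nonneg[of \<omega> v x] by simp
  qed
qed

theorem lemma6p1:
  fixes ellvec :: "real ^ 'n" and f :: "'n \<Rightarrow> real ^ 'n" and i0 :: 'n
    and lam \<alpha> :: real
  assumes "CARD('n) \<ge> 2"
    and "norm ellvec = 1"
    and "\<forall>i j. f i \<bullet> f j = (if i = j then 1 else 0)"
    and "f i0 = ellvec"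
    and "lam > 0"
    and "\<alpha> > real CARD('n) + 3"
  shows "\<exists>c>0. \<forall>L::real. \<forall>\<omega> :: 'n config. L \<ge> 1 \<longrightarrow>
           (\<exists>!C. C \<in> infinite_clusters \<omega>) \<longrightarrow> 0 \<in> Kinf \<omega> \<longrightarrow>
           Lambda \<omega> (lam *\<^sub>R ellvec) (box f i0 L (L powr \<alpha>))
             \<ge> ereal (c * L powr (- 2 * real CARD('n) * \<alpha>))
                * expE (ereal (- 2 * lam) * BKbox \<omega> ellvec f i0 L (L powr \<alpha>))"
proof -
  define K where "K = 2 * 3 ^ CARD('n) * exp (3 * lam)"
  define c where "c = 1 / (K * (3 * CARD('n)) ^ (2 * CARD('n)))"
  have "c > 0" by (simp add: c_def K_def)
  have "1 \<le> \<alpha>" using assms(6) of_nat_0_le_iff[of "CARD('n)"] by linarith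
  have "Lambda \<omega> (lam *\<^sub>R ellvec) (box f i0 L (L powr \<alpha>))
      \<ge> ereal (c * L powr (- 2 * real CARD('n) * \<alpha>))
         * expE (ereal (- 2 * lam) * BKbox \<omega> ellvec f i0 L (L powr \<alpha>))" if "L \<ge> 1" for L \<omega>
  proof -
    let ?B = "box f i0 L (L powr \<alpha>)"
    have "L \<le> L powr \<alpha>" using that \<open>1 \<le> \<alpha>\<close> powr_mono[of 1 \<alpha> L] by simp
    have "ereal (c * L powr (- 2 * real CARD('n) * \<alpha>))
        * expE (ereal (- 2 * lam) * BKbox \<omega> ellvec f i0 L (L powr \<alpha>))
        \<le> ereal (1 / (K * (card ?B)^2)) * expE (ereal (- 2 * lam) * (SUP x\<in>?B. BK \<omega> ellvec x))"
      unfolding BKbox_def c_def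
      using inverse_card_box_power2_ge[OF assms(3), of K L \<alpha>] that \<open>1 \<le> \<alpha>\<close>
      by (intro ereal_mult_right_mono expE_nonneg) (simp_all add: K_def)
    also have "\<dots> \<le> Lambda \<omega> (lam *\<^sub>R ellvec) ?B"
    proof -
      have "0 \<in> ?B" by (rule zero_in_box) (use that \<open>L \<le> L powr \<alpha>\<close> in auto)
      then have "?B \<noteq> {}" by blast
      then show ?thesis unfolding K_def
        by (rule Lambda_ge_expE_SUP_BK[OF finite_box[OF assms(3) \<open>L \<le> L powr \<alpha>\<close>] _ assms(5,2)])
    qed
    finally show ?thesis .
  qed
  with \<open>c > 0\<close> show ?thesis by blast
qed

end
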